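(* Let $m=2^{l_m}$ with $l_m\ge1$, let $(v_0,\dots,v_{m-1})$ be a Cantor basis of $\mathbb{F}_{2^m}$, let $0\le l<m/2$, $n=m\cdot 2^l$ and $n_p=n/m=2^l$. Define the $\mathbb{F}_2$-linear map $E_\Sigma:\mathbb{F}_2[x]_{<n}\to\mathbb{F}_{2^m}^{\,n_p}$ by $$E_\Sigma(A)=\bigl(A(v_{l+m/2}+u)\bigr)_{u\in V_l}$$ (i.e. evaluation of $A$, viewed as a polynomial over $\mathbb{F}_{2^m}$, at the $n_p$ points of $\Sigma=v_{l+m/2}+V_l$). Then $E_\Sigma$ is a bijection between $\mathbb{F}_2[x]_{<n}$ and $\mathbb{F}_{2^m}^{\,n_p}$.
   Context: A Cantor basis of $\mathbb{F}_{2^m}$ (for $m$ a power of $2$) is an $\mathbb{F}_2$-basis $(v_0,\dots,v_{m-1})$ of $\mathbb{F}_{2^m}$ with $v_0=1$ and $v_i^2+v_i=v_{i-1}$ for $0<i<m$. For $0\le i\le m$ let $V_0=\{0\}$ and $V_i=\mathrm{span}_{\mathbb{F}_2}\{v_0,\dots,v_{i-1}\}$. $\mathbb{F}_2[x]_{<n}$ denotes the polynomials over $\mathbb{F}_2$ of degree less than $n$. *)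

theory Defs
  imports "HOL-Computational_Algebra.Polynomial" "HOL-Library.FuncSet"
begin

text \<open>F_2 is the prime subfield {0,1} of the ambient field 'a = F_{2^m}.
  The F_2-span of v_0..v_{i-1} (V_i; V_0 = {0}).\<close>
definition span2 :: "(nat \<Rightarrow> 'a::field) \<Rightarrow> nat \<Rightarrow> 'a set" where
  "span2 v i = {(\<Sum>j\<in>S. v j) | S. S \<subseteq> {..<i}}"

text \<open>(v_0,...,v_{m-1}) is an F_2-basis of 'a: each element of 'a is a unique
  F_2-linear combination, i.e. a sum over a unique subset of indices.\<close>
definition F2_basis :: "(nat \<Rightarrow> 'a::field) \<Rightarrow> nat \<Rightarrow> bool" where
  "F2_basis v m \<longleftrightarrow> bij_betw (\<lambda>S. \<Sum>j\<in>S. v j) (Pow {..<m}) (UNIV :: 'a set)"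

definition cantor_basis :: "(nat \<Rightarrow> 'a::field) \<Rightarrow> nat \<Rightarrow> bool" where
  "cantor_basis v m \<longleftrightarrow> F2_basis v m \<and> v 0 = 1 \<and>
     (\<forall>i. 0 < i \<and> i < m \<longrightarrow> v i ^ 2 + v i = v (i - 1))"

text \<open>F_2[x]_{<n}, viewed inside 'a[x]: coefficients in {0,1}, degree < n.\<close>
definition F2_polys_lt :: "nat \<Rightarrow> 'a::field poly set" where
  "F2_polys_lt n = {A. (\<forall>i. coeff A i \<in> {0, 1}) \<and> (A = 0 \<or> degree A < n)}"

end

theory Submission
  imports Defs "HOL-Number_Theory.Residues"
begin

text \<open>
  Write \<open>s(x) = x\<^sup>2 + x\<close>; in characteristic 2 it is additive, commutes with the
  Frobenius map, and the Cantor basis satisfies \<open>s\<^sup>k(v\<^sub>i\<^sub>+\<^sub>k) = v\<^sub>i\<close>.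
  Hence \<open>s\<^sup>l\<close> kills \<open>V\<^sub>l\<close> and maps every point of
  \<open>\<Sigma> = v\<^bsub>l+m/2\<^esub> + V\<^sub>l\<close> to \<open>c = v\<^bsub>m/2\<^esub>\<close>.
  Since \<open>s\<^bsup>m/2\<^esup>(c) = 1\<close>, the element \<open>c\<close> does not lie in the subfield with
  \<open>2\<^bsup>m/2\<^esup>\<close> elements, so its Frobenius orbit \<open>c\<^bsup>2\<^sup>k\<^esup>\<close> (\<open>k < m\<close>) has exactly
  \<open>m\<close> elements. Consequently the sets \<open>\<Sigma>\<^bsup>2\<^sup>k\<^esup>\<close> are pairwise disjoint and
  together contain \<open>n\<close> points. A nonzero difference of two polynomials over
  \<open>\<bbbF>\<^sub>2\<close> vanishing on \<open>\<Sigma>\<close> vanishes on all of them, as \<open>A(x\<^sup>2) = A(x)\<^sup>2\<close>,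
  which is impossible below degree \<open>n\<close>. Injectivity plus a cardinality count
  (\<open>2\<^sup>n\<close> on both sides) gives the bijection.
\<close>

hide_const (open) UnivPoly.coeff UnivPoly.monom

lemma CHAR_eq_2_if_card_eq_power_2:
  assumes "card (UNIV :: 'a::{finite,field} set) = 2 ^ m"
  shows "CHAR('a) = 2"
proof -
  have prime: "prime CHAR('a)"
    using prime_CHAR_semidom finite_imp_CHAR_pos[where 'a='a] by auto
  have "CHAR('a) dvd 2 ^ m"
    using CHAR_dvd_CARD[where 'a='a] assms by simp
  with prime have "CHAR('a) dvd 2"
    by (rule prime_dvd_power)
  with prime two_is_prime_nat show ?thesis
    by (rule primes_dvd_imp_eq)
qed

subsection \<open>Frobenius in characteristic 2\<close>

lemma power_2_power_add:
  fixes x y :: "'a::comm_semiring_1"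
  assumes "CHAR('a) = 2"
  shows "(x + y) ^ 2 ^ k = x ^ 2 ^ k + y ^ 2 ^ k"
  by (rule freshmans_dream') (use assms in auto)

lemma add_self_CHAR_2:
  fixes x :: "'a::ring_1"
  assumes "CHAR('a) = 2"
  shows "x + x = 0"
  using minus_CHAR_2[OF assms, of x x] by simp

lemma power_2_power_inj:
  fixes x y :: "'a::idom"
  assumes "CHAR('a) = 2" and "x ^ 2 ^ k = y ^ 2 ^ k"
  shows "x = y"
proof -
  have "(x + y) ^ 2 ^ k = 0"
    using assms by (simp add: power_2_power_add add_self_CHAR_2)
  then show ?thesis
    using minus_CHAR_2[OF assms(1), of x y] by simp
qed

lemma poly_power_2_power_if_coeffs_01:
  fixes C :: "'a::comm_ring_1 poly"
  assumes "CHAR('a) = 2" and "\<forall>i. coeff C i \<in> {0, 1}"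
  shows "poly C (x ^ 2 ^ k) = poly C x ^ 2 ^ k"
proof -
  have coeff_fixed: "coeff C i ^ 2 ^ k = coeff C i" for i
    using assms(2)[rule_format, of i] by (auto simp: power_0_left)
  have "poly C x ^ 2 ^ k = (\<Sum>i\<le>degree C. (coeff C i * x ^ i) ^ 2 ^ k)"
    unfolding poly_altdef by (rule freshmans_dream_sum') (use assms(1) in auto)
  also have "\<dots> = (\<Sum>i\<le>degree C. coeff C i * (x ^ 2 ^ k) ^ i)"
    by (simp add: power_mult_distrib coeff_fixed flip: power_mult)
      (simp add: mult.commute)
  finally show ?thesis
    by (simp add: poly_altdef)
qed

subsection \<open>Frobenius orbits\<close>

lemma power_power_mult_eq_self:
  fixes x :: "'a::monoid_mult"
  assumes "x ^ q ^ a = x"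
  shows "x ^ q ^ (k * a) = x"
proof (induction k)
  case (Suc k)
  have "x ^ q ^ (Suc k * a) = (x ^ q ^ a) ^ q ^ (k * a)"
    by (simp add: power_add flip: power_mult)
  with Suc assms show ?case
    by simp
qed simp

lemma power_power_gcd_eq_self:
  fixes x :: "'a::monoid_mult"
  assumes "x ^ q ^ a = x" and "x ^ q ^ b = x"
  shows "x ^ q ^ gcd a b = x"
  using assms
proof (induction a b rule: gcd_nat_induct)
  case (step a b)
  have "a = a div b * b + a mod b"
    by simp
  then have "x ^ q ^ a = (x ^ q ^ (a div b * b)) ^ q ^ (a mod b)"
    by (metis power_add power_mult)
  then have "x ^ q ^ (a mod b) = x"
    using step.prems power_power_mult_eq_self[of x q b] by simp
  with step show ?case
    by (simp add: gcd_non_0_nat)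
qed simp

lemma inj_on_frobenius_orbit:
  fixes c :: "'a::idom"
  assumes "CHAR('a) = 2"
    and "c ^ 2 ^ 2 ^ e = c" and "c ^ 2 ^ 2 ^ (e - 1) \<noteq> c"
  shows "inj_on (\<lambda>k. c ^ 2 ^ k) {..<2 ^ e}"
proof -
  have "k = k'" if "k \<le> k'" "k' < 2 ^ e" "c ^ 2 ^ k = c ^ 2 ^ k'" for k k'
  proof (rule ccontr)
    assume "k \<noteq> k'"
    have "(c ^ 2 ^ (k' - k)) ^ 2 ^ k = c ^ 2 ^ k"
      using that by (metis le_add_diff_inverse2 power_add power_mult)
    then have period: "c ^ 2 ^ (k' - k) = c"
      using power_2_power_inj[OF assms(1)] by blast
    have "gcd (k' - k) (2 ^ e) dvd 2 ^ e"
      by simp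
    then obtain i where i: "gcd (k' - k) (2 ^ e) = 2 ^ i"
      using divides_primepow_nat[OF two_is_prime_nat] by blast
    have "gcd (k' - k) (2 ^ e) \<le> k' - k"
      using \<open>k \<le> k'\<close> \<open>k \<noteq> k'\<close> by (intro gcd_le1_nat) auto
    with i \<open>k' < 2 ^ e\<close> have "(2::nat) ^ i < 2 ^ e"
      by linarith
    then have "gcd (k' - k) (2 ^ e) dvd 2 ^ (e - 1)"
      unfolding i by (intro le_imp_power_dvd) simp
    then obtain j where "2 ^ (e - 1) = gcd (k' - k) (2 ^ e) * j"
      by (rule dvdE)
    then have "c ^ 2 ^ 2 ^ (e - 1) = c"
      using power_power_mult_eq_self[OF power_power_gcd_eq_self[OF period assms(2)], of j]
      by (simp add: mult.commute)
    with assms(3) show False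
      by contradiction
  qed
  then show ?thesis
    by (intro inj_onI) (metis lessThan_iff nle_le)
qed

subsection \<open>The map \<open>x\<^sup>2 + x\<close> and the Cantor basis\<close>

definition artin_schreier :: "'a::comm_ring_1 \<Rightarrow> 'a" where
  "artin_schreier x = x ^ 2 + x"

lemma artin_schreier_iter_zero [simp]: "(artin_schreier ^^ k) 0 = 0"
  by (induction k) (simp_all add: artin_schreier_def)

context
  assumes char_2: "CHAR('a::comm_ring_1) = 2"
begin

lemma artin_schreier_add: "artin_schreier (x + y) = artin_schreier x + artin_schreier (y :: 'a)"
proof -
  have "(x + y) ^ 2 = x ^ 2 + y ^ 2"
    using power_2_power_add[OF char_2, of x y 1] by (simp only: power_one_right)
  then show ?thesis
    by (simp add: artin_schreier_def add_ac)
qed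

lemma artin_schreier_iter_add:
  "(artin_schreier ^^ k) (x + y) = (artin_schreier ^^ k) x + (artin_schreier ^^ k) (y :: 'a)"
  by (induction k) (simp_all add: artin_schreier_add)

lemma artin_schreier_iter_sum:
  "(artin_schreier ^^ k) (\<Sum>i\<in>A. f i) = (\<Sum>i\<in>A. (artin_schreier ^^ k) (f i :: 'a))"
  by (induction A rule: infinite_finite_induct) (simp_all add: artin_schreier_iter_add)

lemma artin_schreier_iter_one:
  assumes "k > 0"
  shows "(artin_schreier ^^ k) 1 = (0 :: 'a)"
proof -
  have "artin_schreier (1 :: 'a) = 0"
    using add_self_CHAR_2[OF char_2, of 1] by (simp add: artin_schreier_def)
  with assms show ?thesis
    by (cases k) (simp_all add: funpow_Suc_right del: funpow.simps)
qed

lemma artin_schreier_iter_power_2_power: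
  "(artin_schreier ^^ k) (x ^ 2 ^ j) = ((artin_schreier ^^ k) x) ^ 2 ^ (j :: nat)"
  for x :: 'a
  by (induction k)
    (simp_all add: artin_schreier_def power_2_power_add[OF char_2] mult.commute
      flip: power_mult)

lemma artin_schreier_iter_2_power:
  "(artin_schreier ^^ 2 ^ t) x = x ^ 2 ^ 2 ^ t + (x :: 'a)"
proof (induction t arbitrary: x)
  case 0
  then show ?case
    by (simp add: artin_schreier_def)
next
  case (Suc t)
  have "(artin_schreier ^^ 2 ^ Suc t) x = (artin_schreier ^^ 2 ^ t) ((artin_schreier ^^ 2 ^ t) x)"
    by (simp add: funpow_add mult_2)
  also have "\<dots> = x ^ (2 ^ 2 ^ t * 2 ^ 2 ^ t) + x + (x ^ 2 ^ 2 ^ t + x ^ 2 ^ 2 ^ t)"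
    by (simp add: Suc power_2_power_add[OF char_2] power_mult algebra_simps)
  also have "2 ^ 2 ^ t * 2 ^ 2 ^ t = (2::nat) ^ 2 ^ Suc t"
    by (simp add: mult_2 flip: power_add)
  also have "x ^ 2 ^ 2 ^ t + x ^ 2 ^ 2 ^ t = 0"
    by (rule add_self_CHAR_2[OF char_2])
  finally show ?case
    by simp
qed

end

lemma cantor_basis_artin_schreier_iter:
  assumes "\<forall>i. 0 < i \<and> i < m \<longrightarrow> v i ^ 2 + v i = (v (i - 1) :: 'a::comm_ring_1)"
    and "i + k < m"
  shows "(artin_schreier ^^ k) (v (i + k)) = v i"
  using assms(2)
proof (induction k)
  case (Suc k)
  have "artin_schreier (v (i + Suc k)) = v (i + k)"
    using assms(1) Suc.prems by (simp add: artin_schreier_def)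
  then show ?case
    using Suc by (simp add: funpow_Suc_right del: funpow.simps)
qed simp

lemma artin_schreier_iter_span2:
  fixes v :: "nat \<Rightarrow> 'a::field"
  assumes "CHAR('a) = 2" and "v 0 = 1"
    and "\<forall>i. 0 < i \<and> i < m \<longrightarrow> v i ^ 2 + v i = v (i - 1)"
    and "l \<le> m" and "u \<in> span2 v l"
  shows "(artin_schreier ^^ l) u = 0"
proof -
  obtain T where T: "T \<subseteq> {..<l}" "u = (\<Sum>j\<in>T. v j)"
    using assms(5) unfolding span2_def by auto
  have "(artin_schreier ^^ l) (v j) = 0" if "j < l" for j
  proof -
    have "(artin_schreier ^^ j) (v (0 + j)) = 1"
      using cantor_basis_artin_schreier_iter[OF assms(3), of 0 j] that assms(2,4) by simp
    then have "(artin_schreier ^^ (l - j + j)) (v j) = 0"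
      using artin_schreier_iter_one[OF assms(1), of "l - j"] that
      by (simp only: funpow_add comp_apply) simp
    with that show ?thesis
      by simp
  qed
  with T show ?thesis
    by (auto simp: artin_schreier_iter_sum[OF assms(1)] intro!: sum.neutral)
qed

lemma card_span2:
  assumes "F2_basis v m" and "l \<le> m"
  shows "card (span2 v l) = 2 ^ l"
proof -
  have "span2 v l = (\<lambda>S. \<Sum>j\<in>S. v j) ` Pow {..<l}"
    unfolding span2_def by auto
  moreover have "inj_on (\<lambda>S. \<Sum>j\<in>S. v j) (Pow {..<m})"
    using assms(1) unfolding F2_basis_def by (rule bij_betw_imp_inj_on)
  then have "inj_on (\<lambda>S. \<Sum>j\<in>S. v j) (Pow {..<l})"
    by (rule inj_on_subset) (use assms(2) in auto)
  ultimately show ?thesis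
    by (simp add: card_image card_Pow)
qed

lemma cantor_basis_middle_frobenius_orbit:
  fixes v :: "nat \<Rightarrow> 'a::idom"
  assumes "CHAR('a) = 2" and "v 0 = 1"
    and "\<forall>i. 0 < i \<and> i < m \<longrightarrow> v i ^ 2 + v i = v (i - 1)"
    and "m = 2 ^ e" and "e \<ge> 1"
  shows "inj_on (\<lambda>k. v (m div 2) ^ 2 ^ k) {..<m}"
proof -
  obtain e' where e': "e = Suc e'"
    using assms(5) by (cases e) auto
  define h where "h = m div 2"
  have h: "h = 2 ^ e'" "m = h + h" "h > 0"
    using assms(4) e' unfolding h_def by simp_all
  have to_one: "(artin_schreier ^^ h) (v h) = 1"
    using cantor_basis_artin_schreier_iter[OF assms(3), of 0 h] h assms(2) by simp
  have "(artin_schreier ^^ m) (v h) = 0"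
    using to_one artin_schreier_iter_one[OF assms(1) \<open>h > 0\<close>] h(2)
    by (simp add: funpow_add)
  then have "v h ^ 2 ^ 2 ^ e = - v h"
    using artin_schreier_iter_2_power[OF assms(1), of e] assms(4) by (simp add: add_eq_0_iff2)
  then have "v h ^ 2 ^ 2 ^ e = v h"
    by (simp add: uminus_CHAR_2[OF assms(1)])
  moreover have "v h ^ 2 ^ 2 ^ (e - 1) \<noteq> v h"
  proof
    assume "v h ^ 2 ^ 2 ^ (e - 1) = v h"
    then have "(artin_schreier ^^ h) (v h) = 0"
      using artin_schreier_iter_2_power[OF assms(1), of e'] h(1) e'
      by (simp add: add_self_CHAR_2[OF assms(1)])
    with to_one show False
      by simp
  qed
  ultimately show ?thesis
    using inj_on_frobenius_orbit[OF assms(1)] assms(4) unfolding h_def by simp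
qed

lemma cantor_points_frobenius_inj:
  fixes v :: "nat \<Rightarrow> 'a::field"
  assumes "CHAR('a) = 2" and "v 0 = 1"
    and "\<forall>i. 0 < i \<and> i < m \<longrightarrow> v i ^ 2 + v i = v (i - 1)"
    and "m = 2 ^ e" and "e \<ge> 1" and "l < m div 2"
  shows "inj_on (\<lambda>(u, k). (v (l + m div 2) + u) ^ 2 ^ k) (span2 v l \<times> {..<m})"
proof (rule inj_onI, clarify)
  fix u k u' k'
  assume u: "u \<in> span2 v l" "u' \<in> span2 v l" and k: "k < m" "k' < m"
    and eq: "(v (l + m div 2) + u) ^ 2 ^ k = (v (l + m div 2) + u') ^ 2 ^ k'"
  have sigma_to_c: "(artin_schreier ^^ l) (v (l + m div 2) + x) = v (m div 2)"
    if "x \<in> span2 v l" for x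
    using artin_schreier_iter_span2[OF assms(1-3) _ that]
      cantor_basis_artin_schreier_iter[OF assms(3), of "m div 2" l] assms(6)
    by (simp add: artin_schreier_iter_add[OF assms(1)] add.commute)
  have "v (m div 2) ^ 2 ^ k = v (m div 2) ^ 2 ^ k'"
    using arg_cong[OF eq, of "artin_schreier ^^ l"] u
    by (simp add: artin_schreier_iter_power_2_power[OF assms(1)] sigma_to_c)
  then have "k = k'"
    using cantor_basis_middle_frobenius_orbit[OF assms(1-5)] k by (auto dest: inj_onD)
  with eq have "v (l + m div 2) + u = v (l + m div 2) + u'"
    using power_2_power_inj[OF assms(1)] by blast
  with \<open>k = k'\<close> show "u = u' \<and> k = k'"
    by simp
qed

subsection \<open>Polynomials over \<open>\<bbbF>\<^sub>2\<close>\<close>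

lemma F2_polys_lt_iff:
  "A \<in> F2_polys_lt n \<longleftrightarrow> (\<forall>i. coeff A i \<in> {0, 1}) \<and> (\<forall>i\<ge>n. coeff A i = 0)"
proof -
  have "(A = 0 \<or> degree A < n) \<longleftrightarrow> (\<forall>i\<ge>n. coeff A i = 0)"
  proof
    assume "\<forall>i\<ge>n. coeff A i = 0"
    then show "A = 0 \<or> degree A < n"
      by (metis leading_coeff_0_iff not_less)
  qed (auto intro: coeff_eq_0)
  then show ?thesis
    unfolding F2_polys_lt_def by blast
qed

lemma card_F2_polys_lt: "card (F2_polys_lt n :: 'a::field poly set) = 2 ^ n"
proof -
  define poly_of :: "nat set \<Rightarrow> 'a poly" where "poly_of T = (\<Sum>i\<in>T. monom 1 i)" for T
  have coeff_poly_of: "coeff (poly_of T) i = (if i \<in> T then 1 else 0)" if "finite T" for T i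
    using that by (simp add: poly_of_def coeff_sum coeff_monom)
  have support: "{i. coeff A i = 1} \<subseteq> {..<n}" if "A \<in> F2_polys_lt n" for A :: "'a poly"
  proof
    fix i assume "i \<in> {i. coeff A i = 1}"
    with that show "i \<in> {..<n}"
      unfolding F2_polys_lt_iff by (metis lessThan_iff mem_Collect_eq not_le zero_neq_one)
  qed
  have "bij_betw poly_of (Pow {..<n}) (F2_polys_lt n)"
  proof (rule bij_betw_byWitness[where f' = "\<lambda>A :: 'a poly. {i. coeff A i = 1}"])
    show "\<forall>T\<in>Pow {..<n}. {i. coeff (poly_of T) i = 1} = T"
      by (auto simp: coeff_poly_of finite_subset)
    show "\<forall>A\<in>F2_polys_lt n. poly_of {i. coeff A i = 1} = A"
    proof
      fix A :: "'a poly" assume A: "A \<in> F2_polys_lt n"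
      then have "finite {i. coeff A i = 1}"
        using support finite_subset by blast
      with A show "poly_of {i. coeff A i = 1} = A"
        by (intro poly_eqI) (auto simp: coeff_poly_of F2_polys_lt_iff)
    qed
    show "poly_of ` Pow {..<n} \<subseteq> F2_polys_lt n"
    proof clarify
      fix T assume T: "T \<subseteq> {..<n}"
      then have "finite T"
        by (rule finite_subset) simp
      with T show "poly_of T \<in> F2_polys_lt n"
        by (auto simp: F2_polys_lt_iff coeff_poly_of)
    qed
    show "(\<lambda>A :: 'a poly. {i. coeff A i = 1}) ` F2_polys_lt n \<subseteq> Pow {..<n}"
      unfolding image_subset_iff Pow_iff using support by blast
  qed
  then have "card (Pow {..<n}) = card (F2_polys_lt n :: 'a poly set)"
    by (rule bij_betw_same_card)
  then show ?thesis
    by (simp add: card_Pow)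
qed

lemma F2_polys_lt_diff:
  assumes "CHAR('a::field) = 2" and "A \<in> F2_polys_lt n" and "B \<in> F2_polys_lt n"
  shows "A - (B :: 'a poly) \<in> F2_polys_lt n"
proof -
  have "coeff A i - coeff B i \<in> {0, 1}" for i
  proof -
    have "coeff A i \<in> {0, 1}" "coeff B i \<in> {0, 1}"
      using assms(2,3) unfolding F2_polys_lt_iff by auto
    then show ?thesis
      using add_self_CHAR_2[OF assms(1), of 1] by (auto simp: minus_CHAR_2[OF assms(1)])
  qed
  moreover have "coeff A i - coeff B i = 0" if "i \<ge> n" for i
    using assms(2,3) that unfolding F2_polys_lt_iff by simp
  ultimately show ?thesis
    by (simp add: F2_polys_lt_iff)
qed

lemma F2_poly_eval_inj:
  fixes p :: "'b \<Rightarrow> 'a::field"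
  assumes "CHAR('a) = 2" and "finite U"
    and inj: "inj_on (\<lambda>(u, k). p u ^ 2 ^ k) (U \<times> {..<r})"
    and "n \<le> card U * r"
  shows "inj_on (\<lambda>A. \<lambda>u\<in>U. poly A (p u)) (F2_polys_lt n)"
proof (rule inj_onI, rule ccontr)
  fix A B assume A: "A \<in> F2_polys_lt n" and B: "B \<in> F2_polys_lt n"
    and eq: "(\<lambda>u\<in>U. poly A (p u)) = (\<lambda>u\<in>U. poly B (p u))" and "A \<noteq> B"
  define C where "C = A - B"
  have C: "C \<in> F2_polys_lt n" "C \<noteq> 0"
    using F2_polys_lt_diff[OF assms(1) A B] \<open>A \<noteq> B\<close> unfolding C_def by auto
  have "(\<lambda>(u, k). p u ^ 2 ^ k) ` (U \<times> {..<r}) \<subseteq> {x. poly C x = 0}"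
  proof clarify
    fix u k assume "u \<in> U"
    then have "poly C (p u) = 0"
      using fun_cong[OF eq, of u] unfolding C_def by simp
    then show "poly C (p u ^ 2 ^ k) = 0"
      using C(1) poly_power_2_power_if_coeffs_01[OF assms(1)]
      unfolding F2_polys_lt_iff by simp
  qed
  then have "card U * r \<le> card {x. poly C x = 0}"
    using card_mono[OF poly_roots_finite[OF C(2)]] card_image[OF inj] assms(2)
    by (metis card_cartesian_product card_lessThan)
  also have "\<dots> \<le> degree C"
    using card_poly_roots_bound[OF C(2)] .
  also have "\<dots> < n"
    using C unfolding F2_polys_lt_def by auto
  finally show False
    using assms(4) by simp
qed

lemma F2_poly_eval_bij:
  fixes p :: "'b \<Rightarrow> 'a::{finite,field}"
  assumes "CHAR('a) = 2" and "card (UNIV :: 'a set) = 2 ^ r" and "finite U"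
    and "inj_on (\<lambda>(u, k). p u ^ 2 ^ k) (U \<times> {..<r})"
    and "n = card U * r"
  shows "bij_betw (\<lambda>A. \<lambda>u\<in>U. poly A (p u)) (F2_polys_lt n) (U \<rightarrow>\<^sub>E (UNIV :: 'a set))"
proof -
  let ?E = "\<lambda>A. \<lambda>u\<in>U. poly A (p u)"
  have inj: "inj_on ?E (F2_polys_lt n)"
    using F2_poly_eval_inj[OF assms(1,3,4)] assms(5) by simp
  have "card (?E ` F2_polys_lt n) = 2 ^ n"
    by (simp add: card_image[OF inj] card_F2_polys_lt)
  also have "\<dots> = card (U \<rightarrow>\<^sub>E (UNIV :: 'a set))"
    using assms(2,3,5) by (simp add: card_PiE mult.commute flip: power_mult)
  finally have "?E ` F2_polys_lt n = U \<rightarrow>\<^sub>E UNIV"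
    by (intro card_subset_eq) (auto intro: finite_PiE assms(3))
  with inj show ?thesis
    unfolding bij_betw_def by simp
qed

theorem proposition2:
  fixes v :: "nat \<Rightarrow> 'a::{finite,field}"
    and m lm l n np :: nat
  assumes "card (UNIV :: 'a set) = 2 ^ m"
    and "m = 2 ^ lm" and "lm \<ge> 1"
    and "cantor_basis v m"
    and "l < m div 2"
    and "n = m * 2 ^ l" and "np = n div m"
  shows "bij_betw (\<lambda>A. \<lambda>u\<in>span2 v l. poly A (v (l + m div 2) + u))
           (F2_polys_lt n) (span2 v l \<rightarrow>\<^sub>E (UNIV :: 'a set))
         \<and> card (span2 v l) = np"
proof -
  have char_2: "CHAR('a) = 2"
    by (rule CHAR_eq_2_if_card_eq_power_2[OF assms(1)])
  have basis: "F2_basis v m" and v0: "v 0 = 1"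
    and rec: "\<forall>i. 0 < i \<and> i < m \<longrightarrow> v i ^ 2 + v i = v (i - 1)"
    using assms(4) unfolding cantor_basis_def by auto
  have card_span: "card (span2 v l) = 2 ^ l"
    using card_span2[OF basis] assms(5) by simp
  have "bij_betw (\<lambda>A. \<lambda>u\<in>span2 v l. poly A (v (l + m div 2) + u))
          (F2_polys_lt n) (span2 v l \<rightarrow>\<^sub>E (UNIV :: 'a set))"
    using cantor_points_frobenius_inj[OF char_2 v0 rec assms(2,3,5)] card_span assms(6)
    by (intro F2_poly_eval_bij[OF char_2 assms(1)]) auto
  moreover have "card (span2 v l) = np"
    using card_span assms(2,6,7) by simp
  ultimately show ?thesis ..
qed

end
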